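(* Let $X$ be a separable Hilbert space over $K$ (with norm induced by the inner product) with orthonormal basis $\{e_j\}_{j=1,2,\ldots}\cup\{e_i^*\}_{i=1,2,\ldots}$, and let $Z$ be the proper closed subspace with orthonormal basis $\{e_j\}$. Let $F:Z\to\mathbb{R}$ be a continuous functional with $F(0)=0$, and suppose there are positive constants $M_1,M_2$ such that for all orthogonal vectors $z_1,z_2$ lying in the union of the one-dimensional subspaces spanned by the individual $e_j$, $F^+(z_1)+F^+(z_2)\le M_1\|z_1+z_2\|_X$ and $F^-(z_1)+F^-(z_2)\le M_2\|z_1+z_2\|_X$. Then there exists a continuous $\hat F:X\to\mathbb{R}$ with $\hat F(z)=F(z)$ for $z\in Z$ and $|\hat F(x_1)+\hat F(x_2)|\le(M_1+M_2)\|x_1+x_2\|_X$ for all orthogonal vectors $x_1,x_2$ lying in the union of the one-dimensional subspaces spanned by the individual $e_j$ or $e_i^*$.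
   Context: $K$ is $\mathbb{R}$ or $\mathbb{C}$. $F^+(z)=\max[F(z),0]$ and $F^-(z)=\max[-F(z),0]$. *)

theory Defs
  imports "HOL-Analysis.Analysis"
begin

text \<open>Scalar field K: the flag cplx selects K = complex (True) or K = real (False).
A complex Hilbert space is encoded as a real Hilbert space (real part of the complex
inner product) together with a complex structure J (multiplication by i).\<close>

definition complex_structure :: "('a::real_inner \<Rightarrow> 'a) \<Rightarrow> bool" where
  "complex_structure J \<longleftrightarrow> linear J \<and> (\<forall>x. J (J x) = - x) \<and> (\<forall>x y. inner (J x) (J y) = inner x y)"

definition kscale :: "bool \<Rightarrow> ('a::real_inner \<Rightarrow> 'a) \<Rightarrow> complex \<Rightarrow> 'a \<Rightarrow> 'a" where
  "kscale cplx J c x = (if cplx then Re c *\<^sub>R x + Im c *\<^sub>R J x else Re c *\<^sub>R x)"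

definition kscalars :: "bool \<Rightarrow> complex set" where
  "kscalars cplx = (if cplx then UNIV else range complex_of_real)"

definition kline :: "bool \<Rightarrow> ('a::real_inner \<Rightarrow> 'a) \<Rightarrow> 'a \<Rightarrow> 'a set" where
  "kline cplx J e = {kscale cplx J c e | c. c \<in> kscalars cplx}"

definition kspan :: "bool \<Rightarrow> ('a::real_inner \<Rightarrow> 'a) \<Rightarrow> 'a set \<Rightarrow> 'a set" where
  "kspan cplx J S = {\<Sum>v\<in>T. kscale cplx J (c v) v | T c. finite T \<and> T \<subseteq> S \<and> (\<forall>v\<in>T. c v \<in> kscalars cplx)}"

text \<open>Orthogonality w.r.t. the K-inner product; in the complex case the complex inner
product is inner x y + i inner x (J y) (up to convention), so both parts must vanish.\<close>
definition korth :: "bool \<Rightarrow> ('a::real_inner \<Rightarrow> 'a) \<Rightarrow> 'a \<Rightarrow> 'a \<Rightarrow> bool" where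
  "korth cplx J x y \<longleftrightarrow> inner x y = 0 \<and> (cplx \<longrightarrow> inner x (J y) = 0)"

definition pos_part :: "('a \<Rightarrow> real) \<Rightarrow> 'a \<Rightarrow> real" where
  "pos_part F z = max (F z) 0"

definition neg_part :: "('a \<Rightarrow> real) \<Rightarrow> 'a \<Rightarrow> real" where
  "neg_part F z = max (- F z) 0"

end

theory Submission
  imports Defs
begin

text \<open>Extend F by zero on the orthogonal complement of Z. Since Z and its complement are closed
and meet only in 0, where F vanishes, the pasted function is continuous on a closed set and
extends continuously to X by Tietze. A pair of orthogonal vectors from the lines
K e_j and K e_i^* then either lies in Z, where the bounds for F^+ and F^- add up, or has
a member on which the extension vanishes; in the latter case one uses the single-vector bound
obtained by pairing with 0 and the Pythagorean inequality norm x \<le> norm (x + y).\<close>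

lemma norm_le_norm_add_orthogonal:
  fixes x y :: "'a::real_inner"
  assumes "orthogonal x y"
  shows "norm x \<le> norm (x + y)"
  by (rule power2_le_imp_le) (simp_all add: norm_add_Pythagorean[OF assms])

lemma closed_orthogonal_comp: "closed (orthogonal_comp (S :: 'a::real_inner set))"
proof -
  have "orthogonal_comp S = (\<Inter>y\<in>S. {x. inner y x = 0})"
    by (auto simp: orthogonal_comp_def orthogonal_def)
  then show ?thesis by (auto intro!: closed_INT closed_Collect_eq continuous_intros)
qed

lemma orthogonal_comp_closure: "orthogonal_comp (closure S) = orthogonal_comp (S :: 'a::real_inner set)"
proof
  show "orthogonal_comp (closure S) \<subseteq> orthogonal_comp S"
    by (rule orthogonal_comp_anti_mono[OF closure_subset])
  show "orthogonal_comp S \<subseteq> orthogonal_comp (closure S)"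
  proof
    fix x assume "x \<in> orthogonal_comp S"
    then have "S \<subseteq> {y. inner y x = 0}" by (auto simp: orthogonal_comp_def orthogonal_def)
    moreover have "closed {y. inner y x = 0}" by (rule closed_Collect_eq) (auto intro: continuous_intros)
    ultimately have "closure S \<subseteq> {y. inner y x = 0}" by (rule closure_minimal)
    then show "x \<in> orthogonal_comp (closure S)" by (auto simp: orthogonal_comp_def orthogonal_def)
  qed
qed

lemma continuous_extension_closed_real:
  fixes f :: "'a::metric_space \<Rightarrow> real"
  assumes "closed S" and "continuous_on S f"
  obtains g where "continuous_on UNIV g" and "\<And>x. x \<in> S \<Longrightarrow> g x = f x"
proof -
  have "normal_space (euclidean :: 'a topology)"
    by (simp add: metrizable_imp_normal_space metrizable_space_euclidean)
  moreover have "closedin euclidean S" using assms(1) by simp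
  moreover have "continuous_map (subtopology euclidean S) euclideanreal f"
    using assms(2) by (simp add: continuous_map_iff_continuous)
  ultimately obtain g where "continuous_map euclidean euclideanreal g" "\<And>x. x \<in> S \<Longrightarrow> g x = f x"
    using Tietze_extension_realinterval[of euclidean S UNIV f] by auto
  then show ?thesis using that by (simp add: continuous_map_iff_continuous)
qed

lemma continuous_extension_by_zero_closed_real:
  fixes f :: "'a::metric_space \<Rightarrow> real"
  assumes "closed S" "closed T" "continuous_on S f" "\<forall>x\<in>S \<inter> T. f x = 0"
  obtains g where "continuous_on UNIV g" "\<And>x. x \<in> S \<Longrightarrow> g x = f x" "\<And>x. x \<in> T \<Longrightarrow> g x = 0"
proof -
  define h where "h x = (if x \<in> S then f x else 0)" for x
  have "continuous_on S h"
    using assms(3) by (rule continuous_on_cong[THEN iffD1, rotated 2]) (auto simp: h_def)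
  moreover have "continuous_on T h"
    by (rule continuous_on_cong[THEN iffD1, OF refl _ continuous_on_const[of T 0]])
       (use assms(4) in \<open>auto simp: h_def\<close>)
  ultimately have "continuous_on (S \<union> T) h"
    using assms(1,2) by (rule continuous_on_closed_Un[rotated 2])
  then obtain g where "continuous_on UNIV g" "\<And>x. x \<in> S \<union> T \<Longrightarrow> g x = h x"
    using continuous_extension_closed_real assms(1,2) by (metis closed_Un)
  then show ?thesis using that assms(4) by (auto simp: h_def)
qed

lemma continuous_extension_vanishing_on_orthogonal_comp:
  fixes F :: "'a::real_inner \<Rightarrow> real"
  assumes "closed Z" "continuous_on Z F" "F 0 = 0"
  obtains g where "continuous_on UNIV g" "\<And>x. x \<in> Z \<Longrightarrow> g x = F x"
    "\<And>x. x \<in> orthogonal_comp Z \<Longrightarrow> g x = 0"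
  by (rule continuous_extension_by_zero_closed_real[OF assms(1) closed_orthogonal_comp assms(2)])
     (use assms(3) in \<open>auto simp: orthogonal_comp_def orthogonal_self\<close>)

lemma abs_add_le_of_pos_neg_part_bounds:
  assumes "pos_part F x + pos_part F y \<le> a" and "neg_part F x + neg_part F y \<le> b"
  shows "\<bar>F x + F y\<bar> \<le> a + b"
  using assms by (auto simp: pos_part_def neg_part_def)

lemma inner_kscale_korth:
  assumes J: "cplx \<longrightarrow> complex_structure J" and orth: "korth cplx J u s"
  shows "inner (kscale cplx J a s) (kscale cplx J b u) = 0"
proof (cases cplx)
  case False
  then show ?thesis using orth by (simp add: kscale_def korth_def inner_commute)
next
  case True
  then have JJ: "\<And>x. J (J x) = - x" and JI: "\<And>x y. inner (J x) (J y) = inner x y"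
    using J by (auto simp: complex_structure_def)
  have su: "inner s u = 0" and Js_u: "inner (J s) u = 0"
    using orth True by (auto simp: korth_def inner_commute)
  have s_Ju: "inner s (J u) = 0"
    using JI[of "J s" u] JJ Js_u by simp
  show ?thesis
    using True su Js_u s_Ju JI[of s u] by (simp add: kscale_def inner_add_left inner_add_right)
qed

lemma korth_zero_right:
  assumes "cplx \<longrightarrow> complex_structure J"
  shows "korth cplx J x 0"
  using assms by (auto simp: korth_def complex_structure_def linear_0)

lemma zero_in_kline: "0 \<in> kline cplx J e"
  by (auto simp: kline_def kscalars_def kscale_def intro!: exI[of _ 0])

lemma kline_subset_kspan:
  assumes "v \<in> S"
  shows "kline cplx J v \<subseteq> kspan cplx J S"
proof
  fix x assume "x \<in> kline cplx J v"
  then obtain c where "c \<in> kscalars cplx" "x = kscale cplx J c v" by (auto simp: kline_def)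
  then show "x \<in> kspan cplx J S"
    unfolding kspan_def using assms by (auto intro!: exI[of _ "{v}"] exI[of _ "\<lambda>_. c"])
qed

lemma kline_subset_orthogonal_comp_kspan:
  assumes J: "cplx \<longrightarrow> complex_structure J" and orth: "\<And>v. v \<in> S \<Longrightarrow> korth cplx J v s"
  shows "kline cplx J s \<subseteq> orthogonal_comp (kspan cplx J S)"
proof
  fix x assume "x \<in> kline cplx J s"
  then obtain a where x: "x = kscale cplx J a s" by (auto simp: kline_def)
  show "x \<in> orthogonal_comp (kspan cplx J S)"
    unfolding orthogonal_comp_def mem_Collect_eq
  proof
    fix z assume "z \<in> kspan cplx J S"
    then obtain T c where z: "z = (\<Sum>v\<in>T. kscale cplx J (c v) v)" "finite T" "T \<subseteq> S"
      by (auto simp: kspan_def)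
    have "orthogonal (kscale cplx J (c v) v) x" if "v \<in> T" for v
      using inner_kscale_korth[OF J orth, of v] that z(3) x
      by (auto simp: orthogonal_def inner_commute)
    then show "orthogonal z x"
      using z(1,2) by (simp add: orthogonal_lvsum)
  qed
qed

lemma orthogonal_pair_bound_Un_vanishing:
  fixes g :: "'a::real_inner \<Rightarrow> real"
  assumes "0 \<in> A" and "M \<ge> 0"
    and vanish: "\<And>x. x \<in> B \<Longrightarrow> g x = 0"
    and orth_inner: "\<And>x y. orth x y \<Longrightarrow> orthogonal x y"
    and orth_zero: "\<And>x. orth x 0"
    and bound: "\<And>x y. x \<in> A \<Longrightarrow> y \<in> A \<Longrightarrow> orth x y \<Longrightarrow> \<bar>g x + g y\<bar> \<le> M * norm (x + y)"
    and x: "x \<in> A \<union> B" and y: "y \<in> A \<union> B" and xy: "orth x y"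
  shows "\<bar>g x + g y\<bar> \<le> M * norm (x + y)"
proof -
  have "g 0 = 0" using bound[OF \<open>0 \<in> A\<close> \<open>0 \<in> A\<close> orth_zero] by simp
  have single: "\<bar>g u\<bar> \<le> M * norm (u + v)" if "u \<in> A" "orthogonal u v" for u v
  proof -
    have "\<bar>g u\<bar> \<le> M * norm u"
      using bound[OF that(1) \<open>0 \<in> A\<close> orth_zero] \<open>g 0 = 0\<close> by simp
    also have "\<dots> \<le> M * norm (u + v)"
      using norm_le_norm_add_orthogonal[OF that(2)] \<open>M \<ge> 0\<close> by (rule mult_left_mono)
    finally show ?thesis .
  qed
  have xy': "orthogonal x y" "orthogonal y x"
    using orth_inner[OF xy] by (auto simp: orthogonal_commute)
  consider "x \<in> A" "y \<in> A" | "x \<in> A" "y \<in> B" | "x \<in> B" "y \<in> A" | "x \<in> B" "y \<in> B"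
    using x y by blast
  then show ?thesis
  proof cases
    case 1
    then show ?thesis using bound xy by blast
  next
    case 2
    then show ?thesis using single[OF _ xy'(1)] vanish by simp
  next
    case 3
    then show ?thesis using single[OF _ xy'(2)] vanish by (simp add: add.commute)
  next
    case 4
    then show ?thesis using vanish \<open>M \<ge> 0\<close> by simp
  qed
qed

theorem corollary5:
  fixes cplx :: bool and J :: "'a::{real_inner, complete_space} \<Rightarrow> 'a"
    and e estar :: "nat \<Rightarrow> 'a" and F :: "'a \<Rightarrow> real" and M1 M2 :: real and Z :: "'a set"
  assumes J: "cplx \<longrightarrow> complex_structure J"
    and norm_e: "\<forall>j. norm (e j) = 1" and norm_estar: "\<forall>i. norm (estar i) = 1"
    and orth_ee: "\<forall>i j. i \<noteq> j \<longrightarrow> korth cplx J (e i) (e j)"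
    and orth_ss: "\<forall>i j. i \<noteq> j \<longrightarrow> korth cplx J (estar i) (estar j)"
    and orth_es: "\<forall>i j. korth cplx J (e i) (estar j)"
    and basis: "closure (kspan cplx J (range e \<union> range estar)) = UNIV"
    and Z_def: "Z = closure (kspan cplx J (range e))"
    and contF: "continuous_on Z F" and F0: "F 0 = 0"
    and M1: "M1 > 0" and M2: "M2 > 0"
    and hplus: "\<forall>z1 z2. z1 \<in> (\<Union>j. kline cplx J (e j)) \<and> z2 \<in> (\<Union>j. kline cplx J (e j))
                  \<and> korth cplx J z1 z2 \<longrightarrow> pos_part F z1 + pos_part F z2 \<le> M1 * norm (z1 + z2)"
    and hminus: "\<forall>z1 z2. z1 \<in> (\<Union>j. kline cplx J (e j)) \<and> z2 \<in> (\<Union>j. kline cplx J (e j))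
                  \<and> korth cplx J z1 z2 \<longrightarrow> neg_part F z1 + neg_part F z2 \<le> M2 * norm (z1 + z2)"
  shows "\<exists>Fh :: 'a \<Rightarrow> real. continuous_on UNIV Fh \<and> (\<forall>z\<in>Z. Fh z = F z) \<and>
           (\<forall>x1 x2. x1 \<in> (\<Union>j. kline cplx J (e j)) \<union> (\<Union>i. kline cplx J (estar i))
                 \<and> x2 \<in> (\<Union>j. kline cplx J (e j)) \<union> (\<Union>i. kline cplx J (estar i))
                 \<and> korth cplx J x1 x2 \<longrightarrow> \<bar>Fh x1 + Fh x2\<bar> \<le> (M1 + M2) * norm (x1 + x2))"
proof -
  let ?L = "\<Union>j. kline cplx J (e j)"
  let ?Ls = "\<Union>i. kline cplx J (estar i)"
  obtain Fh where Fh_cont: "continuous_on UNIV Fh"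
    and Fh_Z: "\<And>x. x \<in> Z \<Longrightarrow> Fh x = F x" and Fh_perp: "\<And>x. x \<in> orthogonal_comp Z \<Longrightarrow> Fh x = 0"
    using continuous_extension_vanishing_on_orthogonal_comp contF F0 unfolding Z_def by blast
  have "?L \<subseteq> kspan cplx J (range e)"
    by (intro UN_least kline_subset_kspan) simp
  then have L_Z: "?L \<subseteq> Z"
    unfolding Z_def using closure_subset by (rule order_trans)
  have "?Ls \<subseteq> orthogonal_comp (kspan cplx J (range e))"
    by (intro UN_least kline_subset_orthogonal_comp_kspan[OF J]) (use orth_es in auto)
  then have Fh_Ls: "Fh x = 0" if "x \<in> ?Ls" for x
    using that Fh_perp unfolding Z_def orthogonal_comp_closure by blast
  have Fh_L: "\<bar>Fh x + Fh y\<bar> \<le> (M1 + M2) * norm (x + y)"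
    if "x \<in> ?L" "y \<in> ?L" "korth cplx J x y" for x y
  proof -
    have "Fh x = F x" "Fh y = F y" using that(1,2) L_Z Fh_Z by auto
    moreover have "\<bar>F x + F y\<bar> \<le> M1 * norm (x + y) + M2 * norm (x + y)"
      by (intro abs_add_le_of_pos_neg_part_bounds hplus[rule_format] hminus[rule_format] conjI that)
    ultimately show ?thesis by (simp add: distrib_right)
  qed
  have "\<bar>Fh x + Fh y\<bar> \<le> (M1 + M2) * norm (x + y)"
    if "x \<in> ?L \<union> ?Ls" "y \<in> ?L \<union> ?Ls" "korth cplx J x y" for x y
  proof (rule orthogonal_pair_bound_Un_vanishing[where A = ?L and B = ?Ls and orth = "korth cplx J"])
    show "0 \<in> ?L" using zero_in_kline by blast
    show "orthogonal u v" if "korth cplx J u v" for u v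
      using that by (simp add: korth_def orthogonal_def)
  qed (use that M1 M2 Fh_Ls Fh_L korth_zero_right[OF J] in simp_all)
  then show ?thesis using Fh_cont Fh_Z by blast
qed

end
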